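(* Given a field $F$ and a positive integer $n$, there is a finite group $H$ such that the group ring $F[H]$ has a subring isomorphic to the matrix algebra $M_n(F)$. *)

theory Defs
  imports "HOL-Algebra.Group"
begin

text \<open>Group ring F[H] of a finite group H (HOL-Algebra structure) over a field 'a:
  elements are functions carrier H \<rightarrow> F, represented as functions vanishing
  outside carrier H; addition pointwise, multiplication is convolution.\<close>

definition grp_ring_carrier :: "('g, 'b) monoid_scheme \<Rightarrow> ('g \<Rightarrow> 'a::field) set" where
  "grp_ring_carrier H = {f. \<forall>x. x \<notin> carrier H \<longrightarrow> f x = 0}"

definition grp_ring_add :: "('g \<Rightarrow> 'a::field) \<Rightarrow> ('g \<Rightarrow> 'a) \<Rightarrow> ('g \<Rightarrow> 'a)" where
  "grp_ring_add f g = (\<lambda>x. f x + g x)"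

definition grp_ring_mult :: "('g, 'b) monoid_scheme \<Rightarrow> ('g \<Rightarrow> 'a::field) \<Rightarrow> ('g \<Rightarrow> 'a) \<Rightarrow> ('g \<Rightarrow> 'a)" where
  "grp_ring_mult H f g =
     (\<lambda>x. if x \<in> carrier H then (\<Sum>y\<in>carrier H. f y * g (inv\<^bsub>H\<^esub> y \<otimes>\<^bsub>H\<^esub> x)) else 0)"

text \<open>A (not necessarily unital) subring of F[H]: contains 0, closed under
  addition, negation and multiplication.\<close>

definition grp_ring_subring :: "('g, 'b) monoid_scheme \<Rightarrow> ('g \<Rightarrow> 'a::field) set \<Rightarrow> bool" where
  "grp_ring_subring H S \<longleftrightarrow>
     S \<subseteq> grp_ring_carrier H \<and> (\<lambda>_. 0) \<in> S \<and>
     (\<forall>f\<in>S. \<forall>g\<in>S. grp_ring_add f g \<in> S \<and> grp_ring_mult H f g \<in> S) \<and>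
     (\<forall>f\<in>S. (\<lambda>x. - f x) \<in> S)"

definition mat_carrier :: "nat \<Rightarrow> (nat \<Rightarrow> nat \<Rightarrow> 'a::field) set" where
  "mat_carrier n = {A. \<forall>i j. \<not> (i < n \<and> j < n) \<longrightarrow> A i j = 0}"

definition mat_add :: "(nat \<Rightarrow> nat \<Rightarrow> 'a::field) \<Rightarrow> (nat \<Rightarrow> nat \<Rightarrow> 'a) \<Rightarrow> (nat \<Rightarrow> nat \<Rightarrow> 'a)" where
  "mat_add A B = (\<lambda>i j. A i j + B i j)"

definition mat_mult :: "nat \<Rightarrow> (nat \<Rightarrow> nat \<Rightarrow> 'a::field) \<Rightarrow> (nat \<Rightarrow> nat \<Rightarrow> 'a) \<Rightarrow> (nat \<Rightarrow> nat \<Rightarrow> 'a)" where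
  "mat_mult n A B = (\<lambda>i j. if i < n \<and> j < n then (\<Sum>k<n. A i k * B k j) else 0)"

end

theory Submission
  imports Defs "HOL-Algebra.Weak_Morphisms"
begin

text \<open>
  Choose \<open>q \<ge> 2\<close> invertible in \<open>F\<close> and let \<open>H = A \<rtimes> \<int>/n\<close> with \<open>A = (\<int>/q)\<^sup>n\<close>, where
  \<open>\<int>/n\<close> acts by rotating coordinates. Writing \<open>\<epsilon>\<^sub>X\<close> for the averaging idempotent of a
  subgroup \<open>X\<close> and \<open>K\<^sub>i = {w. w\<^sub>i = 0}\<close>, the elements \<open>e\<^sub>i = \<epsilon>\<^sub>K\<^sub>i - \<epsilon>\<^sub>A\<close> are pairwise
  orthogonal idempotents of \<open>F[A]\<close>, since \<open>K\<^sub>i K\<^sub>i' = A\<close> for \<open>i \<noteq> i'\<close>; the rotation \<open>s\<close> permutes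
  them cyclically. Hence \<open>E\<^sub>i\<^sub>j = e\<^sub>i s\<^sup>j\<^sup>-\<^sup>i\<close> is a system of nonzero matrix units in \<open>F[H]\<close>, and
  \<open>A \<mapsto> \<Sum> A\<^sub>i\<^sub>j E\<^sub>i\<^sub>j\<close> embeds \<open>M\<^sub>n(F)\<close>. To obtain a group whose carrier lies in \<open>nat\<close>, the
  matrix units are finally transported along an isomorphism.
\<close>

section \<open>Matrix units in group rings\<close>

lemma grp_ring_mult_sum:
  "grp_ring_mult H (\<lambda>x. \<Sum>i\<in>I. f i x) (\<lambda>x. \<Sum>j\<in>J. g j x)
     = (\<lambda>x. \<Sum>i\<in>I. \<Sum>j\<in>J. grp_ring_mult H (f i) (g j) x)" (is "?L = ?R")
proof
  fix x
  show "?L x = ?R x"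
  proof (cases "x \<in> carrier H")
    case True
    let ?z = "\<lambda>y. inv\<^bsub>H\<^esub> y \<otimes>\<^bsub>H\<^esub> x"
    have "?L x = (\<Sum>y\<in>carrier H. \<Sum>i\<in>I. \<Sum>j\<in>J. f i y * g j (?z y))"
      using True by (simp add: grp_ring_mult_def sum_product)
    also have "\<dots> = (\<Sum>i\<in>I. \<Sum>j\<in>J. \<Sum>y\<in>carrier H. f i y * g j (?z y))"
      by (subst sum.swap) (simp add: sum.swap[of _ "carrier H"])
    also have "\<dots> = ?R x"
      using True by (simp add: grp_ring_mult_def)
    finally show ?thesis .
  qed (simp add: grp_ring_mult_def)
qed

lemma grp_ring_mult_scale:
  "grp_ring_mult H (\<lambda>x. a * f x) (\<lambda>x. b * g x) = (\<lambda>x. a * b * grp_ring_mult H f g x)"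
  by (auto simp: grp_ring_mult_def sum_distrib_left mult_ac)

definition matrix_units ::
    "('g, 'b) monoid_scheme \<Rightarrow> nat \<Rightarrow> (nat \<Rightarrow> nat \<Rightarrow> 'g \<Rightarrow> 'a::field) \<Rightarrow> bool" where
  "matrix_units H n E \<longleftrightarrow>
     (\<forall>i<n. \<forall>j<n. E i j \<in> grp_ring_carrier H \<and> E i j \<noteq> (\<lambda>_. 0)) \<and>
     (\<forall>i<n. \<forall>j<n. \<forall>k<n. \<forall>l<n.
        grp_ring_mult H (E i j) (E k l) = (if j = k then E i l else (\<lambda>_. 0)))"

definition grp_ring_of_mat ::
    "nat \<Rightarrow> (nat \<Rightarrow> nat \<Rightarrow> 'g \<Rightarrow> 'a::field) \<Rightarrow> (nat \<Rightarrow> nat \<Rightarrow> 'a) \<Rightarrow> 'g \<Rightarrow> 'a" where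
  "grp_ring_of_mat n E A = (\<lambda>x. \<Sum>i<n. \<Sum>j<n. A i j * E i j x)"

lemma grp_ring_of_mat_add:
  "grp_ring_of_mat n E (mat_add A B) = grp_ring_add (grp_ring_of_mat n E A) (grp_ring_of_mat n E B)"
  by (simp add: grp_ring_of_mat_def grp_ring_add_def mat_add_def distrib_right sum.distrib)

lemma grp_ring_of_mat_mult:
  assumes "matrix_units H n E"
  shows "grp_ring_of_mat n E (mat_mult n A B)
       = grp_ring_mult H (grp_ring_of_mat n E A) (grp_ring_of_mat n E B)"
proof -
  have B: "grp_ring_of_mat n E B = (\<lambda>x. \<Sum>l<n. \<Sum>k<n. B k l * E k l x)"
    unfolding grp_ring_of_mat_def by (subst sum.swap) simp
  have "grp_ring_mult H (grp_ring_of_mat n E A) (grp_ring_of_mat n E B)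
      = (\<lambda>x. \<Sum>i<n. \<Sum>l<n. \<Sum>j<n. \<Sum>k<n. A i j * B k l * grp_ring_mult H (E i j) (E k l) x)"
    by (subst B) (simp add: grp_ring_of_mat_def grp_ring_mult_sum grp_ring_mult_scale)
  also have "\<dots> = (\<lambda>x. \<Sum>i<n. \<Sum>l<n. \<Sum>j<n. A i j * B j l * E i l x)"
    using assms
    by (simp add: matrix_units_def if_distrib[of "\<lambda>F. F _"] if_distrib[of "(*) _"] cong: if_cong)
  also have "\<dots> = grp_ring_of_mat n E (mat_mult n A B)"
    by (simp add: grp_ring_of_mat_def mat_mult_def sum_distrib_right)
  finally show ?thesis ..
qed

definition mat_single :: "nat \<Rightarrow> nat \<Rightarrow> 'a::field \<Rightarrow> nat \<Rightarrow> nat \<Rightarrow> 'a" where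
  "mat_single k l c = (\<lambda>i j. if i = k \<and> j = l then c else 0)"

lemma mat_mult_single_left:
  assumes "A \<in> mat_carrier n" "k < n"
  shows "mat_mult n (mat_single k k 1) A = (\<lambda>i j. if i = k then A k j else 0)"
  using assms
  by (auto simp: mat_mult_def mat_single_def mat_carrier_def fun_eq_iff
      if_distrib[of "\<lambda>x. x * y" for y] cong: if_cong)

lemma mat_mult_single_right:
  assumes "A \<in> mat_carrier n" "l < n"
  shows "mat_mult n A (mat_single l l 1) = (\<lambda>i j. if j = l then A i l else 0)"
  using assms
  by (auto simp: mat_mult_def mat_single_def mat_carrier_def fun_eq_iff
      if_distrib[of "\<lambda>x. y * x" for y] cong: if_cong)

lemma mat_mult_single_sandwich:
  assumes "A \<in> mat_carrier n" "k < n" "l < n"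
  shows "mat_mult n (mat_mult n (mat_single k k 1) A) (mat_single l l 1) = mat_single k l (A k l)"
proof -
  have "(\<lambda>i j. if i = k then A k j else 0) \<in> mat_carrier n"
    using assms by (simp add: mat_carrier_def)
  then show ?thesis
    using assms by (simp add: mat_mult_single_left mat_mult_single_right) (auto simp: mat_single_def)
qed

lemma grp_ring_of_mat_single:
  assumes "k < n" "l < n"
  shows "grp_ring_of_mat n E (mat_single k l c) = (\<lambda>x. c * E k l x)"
proof
  fix x
  have "(\<Sum>j<n. mat_single k l c i j * E i j x) = (if i = k then c * E k l x else 0)" for i
    using assms
    by (cases "i = k") (simp_all add: mat_single_def if_distrib[of "\<lambda>x. x * y" for y] cong: if_cong)
  then show "grp_ring_of_mat n E (mat_single k l c) x = c * E k l x"
    using assms by (simp add: grp_ring_of_mat_def)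
qed

lemma inj_on_grp_ring_of_mat:
  assumes E: "matrix_units H n E"
  shows "inj_on (grp_ring_of_mat n E) (mat_carrier n)"
proof (rule inj_onI, rule ext, rule ext)
  fix A B k l
  assume A: "A \<in> mat_carrier n" and B: "B \<in> mat_carrier n"
    and eq: "grp_ring_of_mat n E A = grp_ring_of_mat n E B"
  show "A k l = B k l"
  proof (cases "k < n \<and> l < n")
    case True
    then have kl: "k < n" "l < n" by auto
    let ?P = "mat_single k k 1" and ?Q = "mat_single l l 1"
    have "grp_ring_of_mat n E (mat_mult n (mat_mult n ?P A) ?Q)
        = grp_ring_of_mat n E (mat_mult n (mat_mult n ?P B) ?Q)"
      by (simp only: grp_ring_of_mat_mult[OF E] eq)
    then have scaled: "(\<lambda>x. A k l * E k l x) = (\<lambda>x. B k l * E k l x)"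
      using A B kl by (simp only: mat_mult_single_sandwich grp_ring_of_mat_single)
    have "E k l \<noteq> (\<lambda>_. 0)"
      using E kl by (simp add: matrix_units_def)
    then obtain x where "E k l x \<noteq> 0"
      by auto
    moreover have "A k l * E k l x = B k l * E k l x"
      using fun_cong[OF scaled, of x] by simp
    ultimately show ?thesis
      by simp
  next
    case False
    then show ?thesis
      using A B by (simp add: mat_carrier_def)
  qed
qed

lemma matrix_units_imp_mat_subring:
  fixes E :: "nat \<Rightarrow> nat \<Rightarrow> 'g \<Rightarrow> 'a::field"
  assumes E: "matrix_units H n E"
  shows "\<exists>S :: ('g \<Rightarrow> 'a) set. grp_ring_subring H S \<and>
           (\<exists>\<phi>. bij_betw \<phi> (mat_carrier n :: (nat \<Rightarrow> nat \<Rightarrow> 'a) set) S \<and>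
              (\<forall>A\<in>mat_carrier n. \<forall>B\<in>mat_carrier n.
                 \<phi> (mat_add A B) = grp_ring_add (\<phi> A) (\<phi> B) \<and>
                 \<phi> (mat_mult n A B) = grp_ring_mult H (\<phi> A) (\<phi> B)))"
proof -
  let ?\<phi> = "grp_ring_of_mat n E"
  have "?\<phi> ` mat_carrier n \<subseteq> grp_ring_carrier H"
    using E by (auto simp: matrix_units_def grp_ring_carrier_def grp_ring_of_mat_def)
  moreover have "(\<lambda>_. 0) = ?\<phi> (\<lambda>_ _. 0)" "(\<lambda>_ _. 0) \<in> mat_carrier n"
    by (simp_all add: grp_ring_of_mat_def mat_carrier_def)
  moreover have "(\<lambda>x. - ?\<phi> A x) = ?\<phi> (\<lambda>i j. - A i j)" "(\<lambda>i j. - A i j) \<in> mat_carrier n"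
    if "A \<in> mat_carrier n" for A
    using that by (simp_all add: grp_ring_of_mat_def mat_carrier_def sum_negf)
  moreover have "mat_add A B \<in> mat_carrier n" "mat_mult n A B \<in> mat_carrier n"
    if "A \<in> mat_carrier n" "B \<in> mat_carrier n" for A B :: "nat \<Rightarrow> nat \<Rightarrow> 'a"
    using that by (simp_all add: mat_carrier_def mat_add_def mat_mult_def)
  ultimately have "grp_ring_subring H (?\<phi> ` mat_carrier n)"
    unfolding grp_ring_subring_def
    by (auto simp flip: grp_ring_of_mat_add grp_ring_of_mat_mult[OF E])
  moreover have "bij_betw ?\<phi> (mat_carrier n) (?\<phi> ` mat_carrier n)"
    using inj_on_grp_ring_of_mat[OF E] by (simp add: bij_betw_def)
  ultimately show ?thesis
    by (intro exI[of _ "?\<phi> ` mat_carrier n"] exI[of _ ?\<phi>] conjI ballI)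
       (simp_all add: grp_ring_of_mat_add grp_ring_of_mat_mult[OF E])
qed

definition grp_ring_transport ::
    "('g, 'b) monoid_scheme \<Rightarrow> ('g \<Rightarrow> 'h) \<Rightarrow> ('g \<Rightarrow> 'a::field) \<Rightarrow> 'h \<Rightarrow> 'a" where
  "grp_ring_transport G h F = (\<lambda>y. if y \<in> h ` carrier G then F (inv_into (carrier G) h y) else 0)"

lemma grp_ring_mult_transport:
  assumes G: "group G" and H: "group H" and h: "h \<in> iso G H"
  shows "grp_ring_mult H (grp_ring_transport G h F) (grp_ring_transport G h F')
       = grp_ring_transport G h (grp_ring_mult G F F')"
proof
  interpret group_hom G H h
    using G H h by (simp add: group_hom_def group_hom_axioms_def iso_imp_homomorphism)
  have bij: "bij_betw h (carrier G) (carrier H)" and img: "h ` carrier G = carrier H"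
    using h by (auto simp: iso_def bij_betw_def)
  have inv_h: "inv_into (carrier G) h (h x) = x" if "x \<in> carrier G" for x
    using that bij by (simp add: bij_betw_def)
  fix a
  show "grp_ring_mult H (grp_ring_transport G h F) (grp_ring_transport G h F') a
      = grp_ring_transport G h (grp_ring_mult G F F') a"
  proof (cases "a \<in> carrier H")
    case True
    then obtain x where x: "x \<in> carrier G" "a = h x"
      using img by auto
    have "grp_ring_mult H (grp_ring_transport G h F) (grp_ring_transport G h F') a
        = (\<Sum>y\<in>carrier G. grp_ring_transport G h F (h y)
             * grp_ring_transport G h F' (inv\<^bsub>H\<^esub> h y \<otimes>\<^bsub>H\<^esub> h x))"
      using x by (simp add: grp_ring_mult_def) (rule sum.reindex_bij_betw[OF bij, symmetric])
    also have "\<dots> = (\<Sum>y\<in>carrier G. F y * F' (inv\<^bsub>G\<^esub> y \<otimes>\<^bsub>G\<^esub> x))"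
      using x by (intro sum.cong) (simp_all add: grp_ring_transport_def inv_h flip: hom_inv hom_mult)
    finally show ?thesis
      using x by (simp add: grp_ring_transport_def grp_ring_mult_def inv_h)
  qed (simp add: grp_ring_mult_def grp_ring_transport_def img)
qed

lemma matrix_units_transport:
  fixes E :: "nat \<Rightarrow> nat \<Rightarrow> 'g \<Rightarrow> 'a::field"
  assumes G: "group G" and H: "group H" and h: "h \<in> iso G H" and E: "matrix_units G n E"
  shows "matrix_units H n (\<lambda>i j. grp_ring_transport G h (E i j))"
proof -
  have img: "h ` carrier G = carrier H" and inj: "inj_on h (carrier G)"
    using h by (auto simp: iso_def bij_betw_def)
  have "grp_ring_transport G h F \<noteq> (\<lambda>_. 0)"
    if F: "F \<in> grp_ring_carrier G" and nonzero: "F \<noteq> (\<lambda>_. 0)" for F :: "'g \<Rightarrow> 'a"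
  proof -
    obtain x where x: "F x \<noteq> 0"
      using nonzero by auto
    then have "x \<in> carrier G"
      using F by (auto simp: grp_ring_carrier_def)
    then have "grp_ring_transport G h F (h x) = F x"
      using inj by (simp add: grp_ring_transport_def)
    then show ?thesis
      using x by auto
  qed
  moreover have "grp_ring_transport G h F \<in> grp_ring_carrier H" for F :: "'g \<Rightarrow> 'a"
    using img by (simp add: grp_ring_carrier_def grp_ring_transport_def)
  moreover have "grp_ring_transport G h (\<lambda>_. 0) = (\<lambda>_. 0 :: 'a)"
    by (simp add: grp_ring_transport_def)
  ultimately show ?thesis
    using E by (auto simp: matrix_units_def grp_ring_mult_transport[OF G H h])
qed

lemma finite_group_iso_nat_group:
  assumes "group G" "finite (carrier G)"
  shows "\<exists>(H :: nat monoid) h. group H \<and> finite (carrier H) \<and> h \<in> iso G H"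
proof -
  obtain h :: "_ \<Rightarrow> nat" where "inj_on h (carrier G)"
    using assms(2) finite_imp_inj_to_nat_seg by blast
  then show ?thesis
    using assms group.inj_imp_image_group_is_group inj_imp_image_group_iso
    by (metis finite_imageI image_group_carrier)
qed

section \<open>The wreath product of \<open>\<int>/q\<close> by \<open>\<int>/n\<close>\<close>

lemma cyclic_sub_eq_iff:
  fixes a b c n :: nat
  assumes "a < n" "b < n" "c < n"
  shows "(a + n - b) mod n = c \<longleftrightarrow> a = (b + c) mod n"
  using assms by (auto simp: mod_if)

lemma cyclic_sub_add_cancel:
  fixes a b n :: nat
  assumes "a < n" "b < n"
  shows "(b + (a + n - b) mod n) mod n = a" "((a + b) mod n + n - b) mod n = a"
  using assms by (auto simp: mod_if)

lemma cyclic_sub_sub_eq_iff: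
  fixes i j k n :: nat
  assumes "i < n" "j < n" "k < n"
  shows "(k + n - (j + n - i) mod n) mod n = i \<longleftrightarrow> k = j"
proof -
  have "((j + n - i) mod n + i) mod n = j"
    using cyclic_sub_add_cancel(1)[of j n i] assms by (simp add: add.commute)
  then show ?thesis
    using cyclic_sub_eq_iff[of k n "(j + n - i) mod n" i] assms by auto
qed

lemma cyclic_sub_sub_shift_iff:
  fixes i j l r n :: nat
  assumes "i < n" "j < n" "l < n" "r < n"
  shows "(r + n - (j + n - i) mod n) mod n = (l + n - j) mod n \<longleftrightarrow> r = (l + n - i) mod n"
proof -
  have "j + n - i + (l + n - j) = (l + n - i) + n"
    using assms by simp
  then have "((j + n - i) mod n + (l + n - j) mod n) mod n = (l + n - i) mod n"
    by (simp add: mod_add_eq)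
  then show ?thesis
    using cyclic_sub_eq_iff[of r n "(j + n - i) mod n" "(l + n - j) mod n"] assms by auto
qed

text \<open>Elements are pairs \<open>(v, r)\<close> of a vector \<open>v \<in> (\<int>/q)\<^sup>n\<close>, extensional on \<open>{..<n}\<close>,
  and a rotation \<open>r \<in> \<int>/n\<close>, which shifts coordinates by \<open>r\<close>.\<close>

definition wreath :: "nat \<Rightarrow> nat \<Rightarrow> ((nat \<Rightarrow> nat) \<times> nat) monoid" where
  "wreath n q =
     \<lparr>carrier = ({..<n} \<rightarrow>\<^sub>E {..<q}) \<times> {..<n},
      mult = (\<lambda>x y. ((\<lambda>j\<in>{..<n}. (fst x j + fst y ((j + snd x) mod n)) mod q), (snd x + snd y) mod n)),
      one = ((\<lambda>j\<in>{..<n}. 0), 0)\<rparr>"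

lemma wreath_simps:
  "x \<in> carrier (wreath n q) \<longleftrightarrow> fst x \<in> {..<n} \<rightarrow>\<^sub>E {..<q} \<and> snd x < n"
  "x \<otimes>\<^bsub>wreath n q\<^esub> y
     = ((\<lambda>j\<in>{..<n}. (fst x j + fst y ((j + snd x) mod n)) mod q), (snd x + snd y) mod n)"
  "\<one>\<^bsub>wreath n q\<^esub> = ((\<lambda>j\<in>{..<n}. 0), 0)"
  by (auto simp: wreath_def mem_Times_iff)

lemma group_wreath:
  assumes n: "0 < n" and q: "0 < q"
  shows "group (wreath n q)"
proof (rule groupI)
  fix x y z
  assume "x \<in> carrier (wreath n q)" "y \<in> carrier (wreath n q)" "z \<in> carrier (wreath n q)"
  have shift: "((j + snd x) mod n + snd y) mod n = (j + (snd x + snd y) mod n) mod n" for j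
    by (metis add.assoc mod_add_left_eq mod_add_right_eq)
  show "x \<otimes>\<^bsub>wreath n q\<^esub> y \<otimes>\<^bsub>wreath n q\<^esub> z
      = x \<otimes>\<^bsub>wreath n q\<^esub> (y \<otimes>\<^bsub>wreath n q\<^esub> z)"
    using n by (auto simp: wreath_simps shift mod_add_left_eq mod_add_right_eq add.assoc)
next
  fix x
  assume x: "x \<in> carrier (wreath n q)"
  let ?y = "((\<lambda>j\<in>{..<n}. (q - fst x ((j + n - snd x) mod n)) mod q), (n - snd x) mod n)"
  have "fst x m \<le> q" if "m < n" for m
    using x that by (auto simp: wreath_simps PiE_iff less_imp_le)
  then have "?y \<otimes>\<^bsub>wreath n q\<^esub> x = \<one>\<^bsub>wreath n q\<^esub>"
    using x n q cyclic_sub_add_cancel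
    by (auto simp: wreath_simps PiE_iff mod_add_right_eq mod_add_left_eq intro!: restrict_ext)
  moreover have "?y \<in> carrier (wreath n q)"
    using n q by (simp add: wreath_simps)
  ultimately show "\<exists>y\<in>carrier (wreath n q). y \<otimes>\<^bsub>wreath n q\<^esub> x = \<one>\<^bsub>wreath n q\<^esub>"
    by blast
qed (use n q in \<open>auto simp: wreath_simps PiE_iff extensional_def fun_eq_iff\<close>)

lemma wreath_inv_mult:
  assumes n: "0 < n" and q: "0 < q"
    and x: "x \<in> carrier (wreath n q)" and y: "y \<in> carrier (wreath n q)"
  shows "inv\<^bsub>wreath n q\<^esub> y \<otimes>\<^bsub>wreath n q\<^esub> x
       = ((\<lambda>m\<in>{..<n}. (fst x ((m + n - snd y) mod n) + q - fst y ((m + n - snd y) mod n)) mod q),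
          (snd x + n - snd y) mod n)" (is "_ = ?z")
proof -
  interpret group "wreath n q"
    using n q by (rule group_wreath)
  have "?z \<in> carrier (wreath n q)"
    using n q by (simp add: wreath_simps)
  moreover have "x = y \<otimes>\<^bsub>wreath n q\<^esub> ?z"
  proof -
    have "fst x j < q" "fst y j < q" if "j < n" for j
      using x y that by (auto simp: wreath_simps PiE_iff)
    then have "(fst y j + (fst x j + q - fst y j)) mod q = fst x j" if "j < n" for j
      using that by fastforce
    then show ?thesis
      using x y cyclic_sub_add_cancel
      by (auto simp: wreath_simps PiE_iff extensional_def fun_eq_iff mod_add_right_eq prod_eq_iff)
  qed
  ultimately show ?thesis
    using x y by (simp add: inv_solve_left')
qed

section \<open>Orthogonal idempotents of the base group\<close>

lemma card_PiE_fixed_coords: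
  assumes J: "J \<subseteq> {..<n}" and f: "\<And>j. j \<in> J \<Longrightarrow> f j < q"
  shows "card (({..<n} \<rightarrow>\<^sub>E {..<q}) \<inter> {w. \<forall>j\<in>J. w j = f j}) = q ^ (n - card J)"
proof -
  have "({..<n} \<rightarrow>\<^sub>E {..<q}) \<inter> {w. \<forall>j\<in>J. w j = f j}
      = PiE {..<n} (\<lambda>j. if j \<in> J then {f j} else {..<q})"
    using J f by (auto simp: PiE_def Pi_def split: if_splits)
  then have "card (({..<n} \<rightarrow>\<^sub>E {..<q}) \<inter> {w. \<forall>j\<in>J. w j = f j})
      = (\<Prod>j<n. if j \<in> J then 1 else q)"
    by (simp add: card_PiE if_distrib[of card] cong: if_cong)
  also have "\<dots> = q ^ card ({..<n} - J)"
    by (simp add: prod.If_cases Diff_eq)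
  also have "card ({..<n} - J) = n - card J"
    using J by (simp add: card_Diff_subset finite_subset)
  finally show ?thesis .
qed

text \<open>The coefficient function of \<open>\<epsilon>\<^sub>K - \<epsilon>\<^sub>A\<close> in \<open>F[A]\<close>, where \<open>K = {w. w i = a}\<close> is a coset
  of index \<open>q\<close> in \<open>A = (\<int>/q)\<^sup>n\<close>; for \<open>a = 0\<close> this is the idempotent \<open>e\<^sub>i\<close>.\<close>

definition coord_weight :: "nat \<Rightarrow> nat \<Rightarrow> nat \<Rightarrow> nat \<Rightarrow> (nat \<Rightarrow> nat) \<Rightarrow> 'a::field" where
  "coord_weight n q i a w = of_bool (w i = a) / of_nat q ^ (n - 1) - 1 / of_nat q ^ n"

lemma sum_coord_weight_products:
  assumes i: "i < n" and i': "i' < n" and a: "a < q" and b: "b < q" and q: "(of_nat q :: 'a::field) \<noteq> 0"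
  shows "(\<Sum>w\<in>{..<n} \<rightarrow>\<^sub>E {..<q}. coord_weight n q i a w * (coord_weight n q i' b w :: 'a))
       = (if i = i' then of_bool (a = b) / of_nat q ^ (n - 1) - 1 / of_nat q ^ n else 0)"
proof -
  let ?P = "{..<n} \<rightarrow>\<^sub>E {..<q}"
  let ?N = "\<lambda>S. of_nat (card (?P \<inter> S)) :: 'a"
  define c :: 'a where "c = 1 / of_nat q ^ (n - 1)"
  define d :: 'a where "d = 1 / of_nat q ^ n"
  have expand: "coord_weight n q i a w * coord_weight n q i' b w
      = c * c * of_bool (w i = a \<and> w i' = b) - c * d * of_bool (w i = a) - c * d * of_bool (w i' = b) + d * d"
    for w :: "nat \<Rightarrow> nat"
    by (auto simp: coord_weight_def c_def d_def algebra_simps)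
  have single: "?N {w. w k = e} = of_nat q ^ (n - 1)" if "k < n" "e < q" for k e
    using card_PiE_fixed_coords[of "{k}" n "\<lambda>_. e" q] that by simp
  have "(\<Sum>w\<in>?P. coord_weight n q i a w * (coord_weight n q i' b w :: 'a))
      = c * c * ?N {w. w i = a \<and> w i' = b} - c * d * ?N {w. w i = a} - c * d * ?N {w. w i' = b}
        + d * d * of_nat q ^ n"
    by (simp add: expand sum.distrib sum_subtractf finite_PiE card_PiE flip: sum_distrib_left)
  also have "\<dots> = c * c * ?N {w. w i = a \<and> w i' = b} - 2 * c * d * of_nat q ^ (n - 1) + d * d * of_nat q ^ n"
    using single i i' a b by (simp add: algebra_simps)
  also have "\<dots> = (if i = i' then of_bool (a = b) / of_nat q ^ (n - 1) - 1 / of_nat q ^ n else 0)"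
  proof (cases "i = i'")
    case True
    have "?N {w. w i = a \<and> w i' = b} = of_bool (a = b) * of_nat q ^ (n - 1)"
    proof (cases "a = b")
      case False
      then have empty: "{w. w i = a \<and> w i' = b} = {}"
        using True by auto
      show ?thesis
        unfolding empty using False by simp
    qed (use True single[OF i a] in simp)
    then show ?thesis
      using True i q by (simp add: c_def d_def power_diff field_simps)
  next
    case False
    have "card (({..<n} \<rightarrow>\<^sub>E {..<q}) \<inter> {w. \<forall>j\<in>{i, i'}. w j = (if j = i then a else b)})
        = q ^ (n - card {i, i'})"
      using i i' a b by (intro card_PiE_fixed_coords) auto
    then have "?N {w. w i = a \<and> w i' = b} = of_nat q ^ (n - 2)"
      using False by (simp add: conj_commute numeral_2_eq_2)
    then show ?thesis
      using False i i' q by (simp add: c_def d_def power_diff field_simps power2_eq_square)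
  qed
  finally show ?thesis .
qed

text \<open>The coefficient function of \<open>E\<^sub>i\<^sub>j = e\<^sub>i s\<^sup>j\<^sup>-\<^sup>i\<close>, where \<open>s = (0, 1)\<close>.\<close>

definition wreath_unit :: "nat \<Rightarrow> nat \<Rightarrow> nat \<Rightarrow> nat \<Rightarrow> (nat \<Rightarrow> nat) \<times> nat \<Rightarrow> 'a::field" where
  "wreath_unit n q i j x =
     (if x \<in> carrier (wreath n q) \<and> snd x = (j + n - i) mod n then coord_weight n q i 0 (fst x) else 0)"

lemma wreath_unit_inv_mult:
  assumes n: "0 < n" and q: "0 < q" and x: "(v, r) \<in> carrier (wreath n q)"
    and w: "w \<in> {..<n} \<rightarrow>\<^sub>E {..<q}" and p: "p < n" and k: "k < n"
  shows "wreath_unit n q k l (inv\<^bsub>wreath n q\<^esub> (w, p) \<otimes>\<^bsub>wreath n q\<^esub> (v, r))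
       = (if (r + n - p) mod n = (l + n - k) mod n
          then coord_weight n q ((k + n - p) mod n) (v ((k + n - p) mod n)) w else 0 :: 'a::field)"
proof -
  let ?G = "wreath n q" and ?i = "(k + n - p) mod n"
  let ?z = "inv\<^bsub>?G\<^esub> (w, p) \<otimes>\<^bsub>?G\<^esub> (v, r)"
  interpret group ?G
    using n q by (rule group_wreath)
  have wp: "(w, p) \<in> carrier ?G"
    using w p by (simp add: wreath_simps)
  then have z: "fst ?z k = (v ?i + q - w ?i) mod q" "snd ?z = (r + n - p) mod n"
    using wreath_inv_mult[OF n q x] x k by simp_all
  have "?z \<in> carrier ?G"
    using wp x by simp
  have "v ?i < q" "w ?i < q"
    using x w n by (auto simp: wreath_simps PiE_iff)
  then have "(v ?i + q - w ?i) mod q = 0 \<longleftrightarrow> w ?i = v ?i"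
    using cyclic_sub_eq_iff[of "v ?i" q "w ?i" 0] q by auto
  with z \<open>?z \<in> carrier ?G\<close> show ?thesis
    by (simp add: wreath_unit_def coord_weight_def)
qed

lemma wreath_unit_mult:
  assumes n: "0 < n" and q: "0 < q" and q_nonzero: "(of_nat q :: 'a::field) \<noteq> 0"
    and ijkl: "i < n" "j < n" "k < n" "l < n"
  shows "grp_ring_mult (wreath n q) (wreath_unit n q i j) (wreath_unit n q k l)
       = (if j = k then wreath_unit n q i l else (\<lambda>_. 0 :: 'a))"
proof
  let ?G = "wreath n q" and ?P = "{..<n} \<rightarrow>\<^sub>E {..<q}"
  let ?E = "wreath_unit n q :: _ \<Rightarrow> _ \<Rightarrow> _ \<Rightarrow> 'a"
  fix x
  show "grp_ring_mult ?G (?E i j) (?E k l) x = (if j = k then ?E i l else (\<lambda>_. 0)) x"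
  proof (cases "x \<in> carrier ?G")
    case True
    then obtain v r where x: "x = (v, r)" "(v, r) \<in> carrier ?G" and v: "v \<in> ?P" and r: "r < n"
      by (cases x) (auto simp: wreath_simps)
    define p where "p = (j + n - i) mod n"
    define i' where "i' = (k + n - p) mod n"
    define aligned where "aligned \<longleftrightarrow> (r + n - p) mod n = (l + n - k) mod n"
    have p: "p < n" and i': "i' < n" and v_i': "v i' < q"
      using n v by (auto simp: p_def i'_def PiE_iff)
    have second_factor: "?E k l (inv\<^bsub>?G\<^esub> (w, p) \<otimes>\<^bsub>?G\<^esub> x)
        = (if aligned then coord_weight n q i' (v i') w else 0)" if "w \<in> ?P" for w
      using wreath_unit_inv_mult[where 'a = 'a, OF n q x(2) that p ijkl(3)]
      by (simp add: x aligned_def i'_def)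
    have "grp_ring_mult ?G (?E i j) (?E k l) x
        = (\<Sum>w\<in>?P. \<Sum>s<n. ?E i j (w, s) * ?E k l (inv\<^bsub>?G\<^esub> (w, s) \<otimes>\<^bsub>?G\<^esub> x))"
      using x by (simp add: grp_ring_mult_def wreath_def sum.cartesian_product)
    also have "\<dots> = (\<Sum>w\<in>?P. coord_weight n q i 0 w * ?E k l (inv\<^bsub>?G\<^esub> (w, p) \<otimes>\<^bsub>?G\<^esub> x))"
      using p
      by (intro sum.cong refl)
         (simp add: wreath_unit_def wreath_simps p_def if_distrib[of "\<lambda>x. x * y" for y] cong: if_cong)
    also have "\<dots> = (if aligned then \<Sum>w\<in>?P. coord_weight n q i 0 w * coord_weight n q i' (v i') w else 0)"
      by (simp add: second_factor cong: sum.cong)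
    also have "\<dots> = (if aligned then if i = i' then of_bool (0 = v i') / of_nat q ^ (n - 1) - 1 / of_nat q ^ n
        else 0 else 0)"
      by (simp only: sum_coord_weight_products[OF ijkl(1) i' q v_i' q_nonzero])
    also have "\<dots> = (if j = k then ?E i l else (\<lambda>_. 0)) x"
    proof -
      have "i' = i \<longleftrightarrow> j = k"
        using cyclic_sub_sub_eq_iff[of i n j k] ijkl by (auto simp: i'_def p_def)
      moreover have "j = k \<Longrightarrow> aligned \<longleftrightarrow> r = (l + n - i) mod n"
        using cyclic_sub_sub_shift_iff[of i n j l r] ijkl r by (simp add: aligned_def p_def)
      ultimately show ?thesis
        using x by (auto simp: wreath_unit_def coord_weight_def)
    qed
    finally show ?thesis .
  qed (simp add: grp_ring_mult_def wreath_unit_def)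
qed

lemma matrix_units_wreath:
  assumes n: "0 < n" and q: "2 \<le> q" and q_nonzero: "(of_nat q :: 'a::field) \<noteq> 0"
  shows "matrix_units (wreath n q) n (wreath_unit n q :: _ \<Rightarrow> _ \<Rightarrow> _ \<Rightarrow> 'a)"
proof -
  have "wreath_unit n q i j \<noteq> (\<lambda>_. 0 :: 'a)" if "i < n" for i j
  proof -
    have "wreath_unit n q i j ((\<lambda>m\<in>{..<n}. 1), (j + n - i) mod n) \<noteq> (0 :: 'a)"
      using n q q_nonzero that by (simp add: wreath_unit_def wreath_simps coord_weight_def)
    then show ?thesis
      by auto
  qed
  moreover have "wreath_unit n q i j \<in> (grp_ring_carrier (wreath n q) :: (_ \<Rightarrow> 'a) set)" for i j
    by (simp add: grp_ring_carrier_def wreath_unit_def)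
  ultimately show ?thesis
    using n q q_nonzero by (simp add: matrix_units_def wreath_unit_mult)
qed

lemma ex_of_nat_nonzero_ge_2: "\<exists>q::nat. 2 \<le> q \<and> (of_nat q :: 'a::field) \<noteq> 0"
proof (cases "(2 :: 'a) = 0")
  case True
  have "(of_nat 3 :: 'a) = 2 + 1"
    by simp
  then have "(of_nat 3 :: 'a) = 1"
    using True by simp
  then show ?thesis
    by (intro exI[of _ 3]) simp
qed (intro exI[of _ 2], simp)

theorem lemma3p1:
  fixes n :: nat
  assumes "0 < n"
  shows "\<exists>H :: nat monoid. group H \<and> finite (carrier H) \<and>
           (\<exists>S :: (nat \<Rightarrow> 'a::field) set. grp_ring_subring H S \<and>
              (\<exists>\<phi>. bij_betw \<phi> (mat_carrier n :: (nat \<Rightarrow> nat \<Rightarrow> 'a) set) S \<and>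
                 (\<forall>A\<in>mat_carrier n. \<forall>B\<in>mat_carrier n.
                    \<phi> (mat_add A B) = grp_ring_add (\<phi> A) (\<phi> B) \<and>
                    \<phi> (mat_mult n A B) = grp_ring_mult H (\<phi> A) (\<phi> B))))"
proof -
  obtain q :: nat where q: "2 \<le> q" "(of_nat q :: 'a) \<noteq> 0"
    using ex_of_nat_nonzero_ge_2 by blast
  let ?G = "wreath n q"
  have G: "group ?G" "finite (carrier ?G)"
    using group_wreath assms q by (auto simp: wreath_def finite_PiE)
  obtain H :: "nat monoid" and h where H: "group H" "finite (carrier H)" "h \<in> iso ?G H"
    using finite_group_iso_nat_group[OF G] by blast
  have "matrix_units H n (\<lambda>i j. grp_ring_transport ?G h (wreath_unit n q i j :: _ \<Rightarrow> 'a))"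
    using matrix_units_transport[OF G(1) H(1) H(3) matrix_units_wreath[OF assms q]] .
  then show ?thesis
    using H(1,2) matrix_units_imp_mat_subring by blast
qed

end
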